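(* Let $(\alpha_1,\alpha_2)\in\mathbb{C}^2$ and $p_1,p_2\in\mathbb{C}[u]\setminus\{0\}$ with $p_1(u+\alpha_2/2)p_2(u+\alpha_1/2)=p_1(u-\alpha_2/2)p_2(u-\alpha_1/2)$. Then the noncommutative Kleinian fiber product $\mathcal{A}_{\alpha_1,\alpha_2}(p_1,p_2)$, with its $\mathbb{Z}^2$-gradation, is a crystalline graded ring.
   Context: $\tilde{\mathcal{A}}_{\alpha_1,\alpha_2}(p_1,p_2)$ is the $\mathbb{C}$-algebra generated by $H,X_1^\pm,X_2^\pm$ with relations ($i=1,2$) $HX_i^\pm-X_i^\pm H=\pm\alpha_iX_i^\pm$, $X_i^+X_i^-=p_i(H-\alpha_i/2)$, $X_i^-X_i^+=p_i(H+\alpha_i/2)$, $X_1^+X_2^-=X_2^-X_1^+$, $X_1^-X_2^+=X_2^+X_1^-$; $\mathcal{A}_{\alpha_1,\alpha_2}(p_1,p_2)$ is its quotient by the ideal of all $a$ with $f(H)a=0$ for some nonzero polynomial $f$. It is $\mathbb{Z}^2$-graded by $\deg H=0$, $\deg X_i^\pm=\pm\mathbf{e}_i$, with degree-zero component $\mathbb{C}[H]$. A group-graded ring $D=\bigoplus_gD_g$ is crystalline graded if each $D_g$ is free of rank one as a left and as a right $D_e$-module on a common generator $a_g\in D_g$. *)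

theory Defs
  imports "HOL-Computational_Algebra.Polynomial" "HOL-Library.Poly_Mapping"
begin

datatype gen = GH | GXp1 | GXm1 | GXp2 | GXm2

text \<open>The free associative C-algebra on the generators: finitely supported
  functions from words to complex coefficients.\<close>
type_synonym falg = "gen list \<Rightarrow>\<^sub>0 complex"

definition fmul :: "falg \<Rightarrow> falg \<Rightarrow> falg" where
  "fmul a b = (\<Sum>u\<in>Poly_Mapping.keys a. \<Sum>v\<in>Poly_Mapping.keys b.
      Poly_Mapping.single (u @ v) (Poly_Mapping.lookup a u * Poly_Mapping.lookup b v))"

definition fscal :: "complex \<Rightarrow> falg" where
  "fscal c = Poly_Mapping.single [] c"

definition fgen :: "gen \<Rightarrow> falg" where
  "fgen x = Poly_Mapping.single [x] 1"

fun fpow :: "falg \<Rightarrow> nat \<Rightarrow> falg" where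
  "fpow a 0 = fscal 1"
| "fpow a (Suc n) = fmul a (fpow a n)"

definition peval :: "complex poly \<Rightarrow> falg \<Rightarrow> falg" where
  "peval f x = (\<Sum>k\<le>degree f. fmul (fscal (coeff f k)) (fpow x k))"

abbreviation "fH \<equiv> fgen GH"

text \<open>Defining relations of \<tilde>A (each listed element is set equal to zero).\<close>
definition rels :: "complex \<Rightarrow> complex \<Rightarrow> complex poly \<Rightarrow> complex poly \<Rightarrow> falg set" where
  "rels a1 a2 p1 p2 =
    { fmul fH (fgen GXp1) - fmul (fgen GXp1) fH - fmul (fscal a1) (fgen GXp1),
      fmul fH (fgen GXm1) - fmul (fgen GXm1) fH + fmul (fscal a1) (fgen GXm1),
      fmul fH (fgen GXp2) - fmul (fgen GXp2) fH - fmul (fscal a2) (fgen GXp2),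
      fmul fH (fgen GXm2) - fmul (fgen GXm2) fH + fmul (fscal a2) (fgen GXm2),
      fmul (fgen GXp1) (fgen GXm1) - peval p1 (fH - fscal (a1 / 2)),
      fmul (fgen GXm1) (fgen GXp1) - peval p1 (fH + fscal (a1 / 2)),
      fmul (fgen GXp2) (fgen GXm2) - peval p2 (fH - fscal (a2 / 2)),
      fmul (fgen GXm2) (fgen GXp2) - peval p2 (fH + fscal (a2 / 2)),
      fmul (fgen GXp1) (fgen GXm2) - fmul (fgen GXm2) (fgen GXp1),
      fmul (fgen GXm1) (fgen GXp2) - fmul (fgen GXp2) (fgen GXm1) }"

inductive_set gen_ideal :: "falg set \<Rightarrow> falg set" for R where
  zero: "0 \<in> gen_ideal R"
| gen: "r \<in> R \<Longrightarrow> fmul (fmul a r) b \<in> gen_ideal R"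
| add: "x \<in> gen_ideal R \<Longrightarrow> y \<in> gen_ideal R \<Longrightarrow> x + y \<in> gen_ideal R"

text \<open>Kernel of the presentation of \<tilde>A: elements equal to zero in \<tilde>A.\<close>
definition Itil :: "complex \<Rightarrow> complex \<Rightarrow> complex poly \<Rightarrow> complex poly \<Rightarrow> falg set" where
  "Itil a1 a2 p1 p2 = gen_ideal (rels a1 a2 p1 p2)"

text \<open>Kernel of the presentation of A: preimage in the free algebra of the
  H-torsion ideal {a \<in> \<tilde>A. f(H) a = 0 for some nonzero polynomial f}.\<close>
definition Jker :: "complex \<Rightarrow> complex \<Rightarrow> complex poly \<Rightarrow> complex poly \<Rightarrow> falg set" where
  "Jker a1 a2 p1 p2 =
     {a. \<exists>f::complex poly. f \<noteq> 0 \<and> fmul (peval f fH) a \<in> Itil a1 a2 p1 p2}"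

fun gdeg :: "gen \<Rightarrow> int \<times> int" where
  "gdeg GH = (0, 0)"
| "gdeg GXp1 = (1, 0)"
| "gdeg GXm1 = (-1, 0)"
| "gdeg GXp2 = (0, 1)"
| "gdeg GXm2 = (0, -1)"

fun wdeg :: "gen list \<Rightarrow> int \<times> int" where
  "wdeg [] = (0, 0)"
| "wdeg (x # w) = (fst (gdeg x) + fst (wdeg w), snd (gdeg x) + snd (wdeg w))"

text \<open>Homogeneous elements of degree g of the free algebra; their images in
  the quotient form the component D_g.\<close>
definition Hom :: "int \<times> int \<Rightarrow> falg set" where
  "Hom g = {a. \<forall>w\<in>Poly_Mapping.keys a. wdeg w = g}"

text \<open>The quotient falg/J is Z^2-graded by the images of the Hom g:
  they span it (automatic) and their sum is direct.\<close>
definition graded_quot :: "falg set \<Rightarrow> bool" where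
  "graded_quot J \<longleftrightarrow>
     (\<forall>(x :: int \<times> int \<Rightarrow> falg) S. finite S \<longrightarrow> (\<forall>g\<in>S. x g \<in> Hom g) \<longrightarrow>
        (\<Sum>g\<in>S. x g) \<in> J \<longrightarrow> (\<forall>g\<in>S. x g \<in> J))"

text \<open>Crystalline graded: each D_g is free of rank one as left and as right
  D_0-module on a common generator a_g \<in> D_g (everything computed modulo J).\<close>
definition crystalline_quot :: "falg set \<Rightarrow> bool" where
  "crystalline_quot J \<longleftrightarrow> graded_quot J \<and>
     (\<forall>g. \<exists>a\<in>Hom g.
        (\<forall>d\<in>Hom g. \<exists>e\<in>Hom (0, 0). d - fmul e a \<in> J) \<and>
        (\<forall>d\<in>Hom g. \<exists>e\<in>Hom (0, 0). d - fmul a e \<in> J) \<and>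
        (\<forall>e\<in>Hom (0, 0). fmul e a \<in> J \<longrightarrow> e \<in> J) \<and>
        (\<forall>e\<in>Hom (0, 0). fmul a e \<in> J \<longrightarrow> e \<in> J))"

end

theory Submission
  imports Defs "HOL-Computational_Algebra.Polynomial_Factorial" "HOL-Computational_Algebra.Field_as_Ring"
begin

text \<open>
  Modulo the relations, \<open>H\<close> commutes with a homogeneous element \<open>d\<close> of degree \<open>g\<close> up to a
  shift, \<open>H d = d (H + g\<^sub>1 \<alpha>\<^sub>1 + g\<^sub>2 \<alpha>\<^sub>2)\<close>, and a letter next to its opposite contracts to a
  polynomial in \<open>H\<close>; so every word of degree \<open>g\<close> is a polynomial in \<open>H\<close> times a reduced word.
  Commuting \<open>X\<^sub>2\<^sup>\<plusminus>\<close> past \<open>X\<^sub>1\<^sup>\<plusminus>\<close> costs only nonzero polynomial factors, so modulo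
  \<open>H\<close>-torsion every reduced word is a \<open>\<complex>(H)\<close>-multiple of the standard monomial \<open>X\<^sup>g\<close> (a power
  of \<open>X\<^sub>1\<^sup>+\<close> or \<open>X\<^sub>1\<^sup>-\<close> followed by a power of \<open>X\<^sub>2\<^sup>+\<close> or \<open>X\<^sub>2\<^sup>-\<close>), which is invertible up to
  a nonzero polynomial in \<open>H\<close>. As \<open>\<complex>[H]\<close> is a principal ideal domain, a B\'ezout combination
  of the finitely many reduced words of degree \<open>g\<close> generates the degree-\<open>g\<close> component as a
  left \<open>\<complex>[H]\<close>-module; invertibility of \<open>X\<^sup>g\<close> makes it free, and the commutation rule for \<open>H\<close>
  turns both statements into right-module ones. The relations are homogeneous, so the torsion
  ideal is graded.
\<close>

section \<open>The free algebra and polynomials in \<open>H\<close>\<close>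

text \<open>With concatenation as addition on words, \<open>falg\<close> becomes the monoid algebra of the
  free monoid, and \<open>fmul\<close> its ring multiplication.\<close>

instantiation list :: (type) monoid_add
begin
definition zero_list :: "'a list" where "zero_list = []"
definition plus_list :: "'a list \<Rightarrow> 'a list \<Rightarrow> 'a list" where "plus_list = append"
instance by standard (auto simp: zero_list_def plus_list_def)
end

lemma poly_mapping_sum_singles:
  "(a :: 'a \<Rightarrow>\<^sub>0 'b::comm_monoid_add) =
     (\<Sum>u\<in>Poly_Mapping.keys a. Poly_Mapping.single u (Poly_Mapping.lookup a u))"
  by (rule poly_mapping_eqI) (simp add: lookup_sum lookup_single when_def in_keys_iff sum.delta')

lemma fmul_eq_times: "fmul a b = a * b"
proof -
  have "a * b = (\<Sum>u\<in>Poly_Mapping.keys a. Poly_Mapping.single u (Poly_Mapping.lookup a u)) *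
     (\<Sum>v\<in>Poly_Mapping.keys b. Poly_Mapping.single v (Poly_Mapping.lookup b v))"
    using poly_mapping_sum_singles[of a] poly_mapping_sum_singles[of b] by simp
  also have "\<dots> = fmul a b"
    by (simp add: fmul_def sum_distrib_left sum_distrib_right mult_single plus_list_def)
       (rule sum.swap)
  finally show ?thesis by simp
qed

lemma fscal_mult_single: "fscal c * Poly_Mapping.single u d = Poly_Mapping.single u (c * d)"
  by (simp add: fscal_def mult_single plus_list_def)

lemma single_mult_fscal: "Poly_Mapping.single u d * fscal c = Poly_Mapping.single u (c * d)"
  by (simp add: fscal_def mult_single plus_list_def mult.commute)

lemma fscal_0 [simp]: "fscal 0 = 0"
  by (simp add: fscal_def)

lemma fscal_1 [simp]: "fscal 1 = 1"
  by (metis fscal_def single_one zero_list_def)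

lemma fscal_mult: "fscal c * fscal d = fscal (c * d)"
  unfolding fscal_def by (simp add: mult_single plus_list_def)

lemma fscal_add: "fscal (c + d) = fscal c + fscal d"
  by (simp add: fscal_def single_add)

lemma fscal_uminus: "fscal (- c) = - fscal c"
  by (simp add: fscal_def single_uminus)

lemma fscal_central: "fscal c * a = a * fscal c"
  by (subst (1 2) poly_mapping_sum_singles[of a])
     (simp add: sum_distrib_left sum_distrib_right fscal_mult_single single_mult_fscal)

abbreviation word :: "gen list \<Rightarrow> falg" where
  "word w \<equiv> Poly_Mapping.single w 1"

lemma word_Nil [simp]: "word [] = 1"
  by (metis single_one zero_list_def)

lemma word_append: "word (u @ v) = word u * word v"
  by (simp add: mult_single plus_list_def)

lemma word_Cons: "word (x # w) = fgen x * word w"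
  by (simp add: fgen_def mult_single plus_list_def)

lemma word_single: "word [x] = fgen x"
  by (simp add: fgen_def)

lemma sum_scaled_words: "a = (\<Sum>w\<in>Poly_Mapping.keys a. fscal (Poly_Mapping.lookup a w) * word w)"
  by (subst poly_mapping_sum_singles) (simp add: fscal_mult_single)

lemma fpow_eq_power: "fpow a n = a ^ n"
  by (induct n) (simp_all add: fscal_def fmul_eq_times)

lemma peval_eq_sum_lessThan:
  assumes "degree f < N"
  shows "peval f x = (\<Sum>k<N. fscal (coeff f k) * x ^ k)"
proof -
  have "(\<Sum>k<N. fscal (coeff f k) * x ^ k) =
        (\<Sum>k\<in>{..degree f} \<union> {degree f<..<N}. fscal (coeff f k) * x ^ k)"
    using assms by (intro sum.cong) auto
  also have "\<dots> = (\<Sum>k\<le>degree f. fscal (coeff f k) * x ^ k)"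
    by (subst sum.union_disjoint) (auto simp: coeff_eq_0)
  finally show ?thesis
    by (simp add: peval_def fmul_eq_times fpow_eq_power)
qed

lemma peval_0 [simp]: "peval 0 x = 0"
  by (simp add: peval_def fmul_eq_times)

lemma peval_pCons: "peval (pCons c f) x = fscal c + x * peval f x"
proof -
  define N where "N = Suc (degree f)"
  have "degree (pCons c f) < Suc N" "degree f < N"
    unfolding N_def using degree_pCons_le[of c f] by auto
  then have "peval (pCons c f) x = fscal c + (\<Sum>k<N. fscal (coeff f k) * x ^ Suc k)"
    by (simp add: peval_eq_sum_lessThan sum.lessThan_Suc_shift del: sum.lessThan_Suc)
  also have "(\<Sum>k<N. fscal (coeff f k) * x ^ Suc k) = x * (\<Sum>k<N. fscal (coeff f k) * x ^ k)"
    by (simp add: sum_distrib_left fscal_central mult.assoc flip: mult.assoc[of _ x])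
  finally show ?thesis
    using \<open>degree f < N\<close> by (simp add: peval_eq_sum_lessThan)
qed

lemma peval_const [simp]: "peval [:c:] x = fscal c"
  by (simp add: peval_pCons)

lemma peval_add: "peval (f + g) x = peval f x + peval g x"
proof -
  define N where "N = Suc (max (degree f) (degree g))"
  have "degree (f + g) < N" "degree f < N" "degree g < N"
    unfolding N_def using degree_add_le_max[of f g] by auto
  then show ?thesis
    by (simp add: peval_eq_sum_lessThan[of _ N] fscal_add distrib_right sum.distrib)
qed

lemma peval_smult: "peval (smult c f) x = fscal c * peval f x"
proof -
  define N where "N = Suc (degree f)"
  have "degree (smult c f) < N" "degree f < N"
    unfolding N_def using degree_smult_le[of c f] by auto
  then show ?thesis
    by (simp add: peval_eq_sum_lessThan[of _ N] sum_distrib_left fscal_mult flip: mult.assoc)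
qed

lemma peval_mult: "peval (f * g) x = peval f x * peval g x"
  by (induct f) (simp_all add: mult_pCons_left peval_add peval_smult peval_pCons distrib_right
      mult.assoc)

lemma peval_pcompose: "peval (pcompose f g) x = peval f (peval g x)"
  by (induct f) (simp_all add: pcompose_pCons peval_add peval_mult peval_pCons)

lemma peval_commute: "peval f x * peval g x = peval g x * peval f x"
  by (metis mult.commute peval_mult)

definition shift :: "complex \<Rightarrow> complex poly \<Rightarrow> complex poly" where
  "shift s f = pcompose f [:s, 1:]"

lemma shift_shift [simp]: "shift s (shift t f) = shift (s + t) f"
proof -
  have "pcompose [:t, 1:] [:s, 1:] = [:s + t, 1:]"
    by (simp add: pcompose_pCons add.commute)
  then show ?thesis
    unfolding shift_def by (metis pcompose_assoc)
qed

lemma shift_0 [simp]: "shift 0 f = f"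
  by (simp add: shift_def)

lemma shift_eq_0_iff [simp]: "shift s f = 0 \<longleftrightarrow> f = 0"
  by (simp add: shift_def pcompose_eq_0_iff)

definition polyH :: "complex poly \<Rightarrow> falg" where
  "polyH f = peval f fH"

lemma polyH_0 [simp]: "polyH 0 = 0"
  by (simp add: polyH_def)

lemma polyH_1 [simp]: "polyH 1 = 1"
  by (simp add: polyH_def one_pCons)

lemma polyH_const [simp]: "polyH [:c:] = fscal c"
  by (simp add: polyH_def)

lemma polyH_linear: "polyH [:s, 1:] = fscal s + fH"
  by (simp add: polyH_def peval_pCons)

lemma polyH_pCons: "polyH (pCons c f) = fscal c + fH * polyH f"
  by (simp add: polyH_def peval_pCons)

lemma polyH_add: "polyH (f + g) = polyH f + polyH g"
  by (simp add: polyH_def peval_add)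

lemma polyH_mult: "polyH (f * g) = polyH f * polyH g"
  by (simp add: polyH_def peval_mult)

lemma polyH_smult: "polyH (smult c f) = fscal c * polyH f"
  by (simp add: polyH_def peval_smult)

lemma polyH_sum: "polyH (sum f S) = (\<Sum>i\<in>S. polyH (f i))"
  by (induct S rule: infinite_finite_induct) (simp_all add: polyH_add)

lemma polyH_commute: "polyH f * polyH g = polyH g * polyH f"
  by (simp add: polyH_def peval_commute)

lemma peval_H_shift:
  "peval f (fH - fscal c) = polyH (shift (- c) f)"
  "peval f (fH + fscal c) = polyH (shift c f)"
  by (simp_all add: polyH_def shift_def peval_pcompose peval_pCons fscal_uminus add.commute)

lemma wdeg_append: "wdeg (u @ v) = (fst (wdeg u) + fst (wdeg v), snd (wdeg u) + snd (wdeg v))"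
  by (induct u) auto

lemma Hom_0: "0 \<in> Hom g"
  by (simp add: Hom_def)

lemma Hom_add: "a \<in> Hom g \<Longrightarrow> b \<in> Hom g \<Longrightarrow> a + b \<in> Hom g"
  using keys_add[of a b] by (auto simp: Hom_def)

lemma Hom_diff: "a \<in> Hom g \<Longrightarrow> b \<in> Hom g \<Longrightarrow> a - b \<in> Hom g"
  using keys_diff[of a b] by (auto simp: Hom_def)

lemma Hom_sum: "(\<And>i. i \<in> S \<Longrightarrow> f i \<in> Hom g) \<Longrightarrow> sum f S \<in> Hom g"
  by (induct S rule: infinite_finite_induct) (auto simp: Hom_0 Hom_add)

lemma Hom_mult:
  assumes "a \<in> Hom h" "b \<in> Hom k"
  shows "a * b \<in> Hom (fst h + fst k, snd h + snd k)"
  unfolding Hom_def mem_Collect_eq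
proof
  fix w assume "w \<in> Poly_Mapping.keys (a * b)"
  then obtain u v where "w = u + v" "u \<in> Poly_Mapping.keys a" "v \<in> Poly_Mapping.keys b"
    using keys_mult[of a b] by blast
  then show "wdeg w = (fst h + fst k, snd h + snd k)"
    using assms by (simp add: Hom_def plus_list_def wdeg_append)
qed

lemma Hom_mult_degree0_left: "a \<in> Hom (0, 0) \<Longrightarrow> b \<in> Hom k \<Longrightarrow> a * b \<in> Hom k"
  using Hom_mult[of a "(0, 0)" b k] by simp

lemma Hom_mult_degree0_right: "a \<in> Hom k \<Longrightarrow> b \<in> Hom (0, 0) \<Longrightarrow> a * b \<in> Hom k"
  using Hom_mult[of a k b "(0, 0)"] by simp

lemma Hom_word: "word w \<in> Hom (wdeg w)"
  by (simp add: Hom_def)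

lemma Hom_fgen: "fgen x \<in> Hom (gdeg x)"
  using Hom_word[of "[x]"] by (simp add: word_single)

lemma Hom_fscal: "fscal c \<in> Hom (0, 0)"
  by (simp add: Hom_def fscal_def)

lemma Hom_peval: "x \<in> Hom (0, 0) \<Longrightarrow> peval f x \<in> Hom (0, 0)"
proof -
  assume x: "x \<in> Hom (0, 0)"
  have "x ^ k \<in> Hom (0, 0)" for k
    using Hom_fscal[of 1] by (induct k) (simp_all add: x Hom_mult_degree0_left)
  then show ?thesis
    by (simp add: peval_def fmul_eq_times fpow_eq_power Hom_sum Hom_mult_degree0_left Hom_fscal)
qed

lemma Hom_polyH: "polyH f \<in> Hom (0, 0)"
  unfolding polyH_def by (rule Hom_peval) (use Hom_fgen[of GH] in simp)

lemma rels_homogeneous: "r \<in> rels a1 a2 p1 p2 \<Longrightarrow> \<exists>g. r \<in> Hom g"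
proof -
  assume r: "r \<in> rels a1 a2 p1 p2"
  have H: "fH \<in> Hom (0, 0)" and
    X: "fgen GXp1 \<in> Hom (1, 0)" "fgen GXm1 \<in> Hom (-1, 0)"
       "fgen GXp2 \<in> Hom (0, 1)" "fgen GXm2 \<in> Hom (0, -1)"
    using Hom_fgen[of GH] Hom_fgen[of GXp1] Hom_fgen[of GXm1] Hom_fgen[of GXp2] Hom_fgen[of GXm2]
    by simp_all
  have comm: "fH * x - x * fH - fscal c * x \<in> Hom g" "fH * x - x * fH + fscal c * x \<in> Hom g"
    if "x \<in> Hom g" for x c g
    using that by (intro Hom_diff Hom_add Hom_mult_degree0_left Hom_mult_degree0_right H Hom_fscal;
        assumption)+
  have pev: "peval p (fH - fscal c) \<in> Hom (0, 0)" "peval p (fH + fscal c) \<in> Hom (0, 0)" for p c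
    by (intro Hom_peval Hom_diff Hom_add H Hom_fscal)+
  have prod: "fgen GXp1 * fgen GXm1 \<in> Hom (0, 0)" "fgen GXm1 * fgen GXp1 \<in> Hom (0, 0)"
    "fgen GXp2 * fgen GXm2 \<in> Hom (0, 0)" "fgen GXm2 * fgen GXp2 \<in> Hom (0, 0)"
    "fgen GXp1 * fgen GXm2 \<in> Hom (1, -1)" "fgen GXm2 * fgen GXp1 \<in> Hom (1, -1)"
    "fgen GXm1 * fgen GXp2 \<in> Hom (-1, 1)" "fgen GXp2 * fgen GXm1 \<in> Hom (-1, 1)"
    using Hom_mult[OF X(1) X(2)] Hom_mult[OF X(2) X(1)] Hom_mult[OF X(3) X(4)]
      Hom_mult[OF X(4) X(3)] Hom_mult[OF X(1) X(4)] Hom_mult[OF X(4) X(1)]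
      Hom_mult[OF X(2) X(3)] Hom_mult[OF X(3) X(2)]
    by simp_all
  show ?thesis
    using r unfolding rels_def fmul_eq_times
    using comm[OF X(1)] comm[OF X(2)] comm[OF X(3)] comm[OF X(4)]
      Hom_diff[OF prod(1) pev(1)] Hom_diff[OF prod(2) pev(2)]
      Hom_diff[OF prod(3) pev(1)] Hom_diff[OF prod(4) pev(2)]
      Hom_diff[OF prod(5,6)] Hom_diff[OF prod(7,8)]
    by blast
qed

definition hcomp :: "int \<times> int \<Rightarrow> falg \<Rightarrow> falg" where
  "hcomp g a = (\<Sum>w\<in>{w\<in>Poly_Mapping.keys a. wdeg w = g}.
      Poly_Mapping.single w (Poly_Mapping.lookup a w))"

lemma lookup_hcomp:
  "Poly_Mapping.lookup (hcomp g a) w = (if wdeg w = g then Poly_Mapping.lookup a w else 0)"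
  by (simp add: hcomp_def lookup_sum lookup_single when_def sum.delta' in_keys_iff)

lemma hcomp_add: "hcomp g (a + b) = hcomp g a + hcomp g b"
  by (rule poly_mapping_eqI) (simp add: lookup_hcomp lookup_add)

lemma hcomp_sum: "hcomp g (sum f S) = (\<Sum>i\<in>S. hcomp g (f i))"
proof (induct S rule: infinite_finite_induct)
  case (empty)
  show ?case by (rule poly_mapping_eqI) (simp add: lookup_hcomp)
qed (simp_all add: hcomp_add poly_mapping_eqI lookup_hcomp)

lemma hcomp_Hom: "hcomp g a \<in> Hom g"
  by (auto simp: Hom_def in_keys_iff lookup_hcomp split: if_splits)

lemma hcomp_of_Hom: "a \<in> Hom h \<Longrightarrow> hcomp g a = (if h = g then a else 0)"
  by (rule poly_mapping_eqI) (auto simp: lookup_hcomp Hom_def in_keys_iff)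

lemma sum_hcomp: "a = (\<Sum>h\<in>wdeg ` Poly_Mapping.keys a. hcomp h a)"
proof (rule poly_mapping_eqI)
  fix w
  have "Poly_Mapping.lookup (\<Sum>h\<in>wdeg ` Poly_Mapping.keys a. hcomp h a) w =
        (if wdeg w \<in> wdeg ` Poly_Mapping.keys a then Poly_Mapping.lookup a w else 0)"
    by (simp add: lookup_sum lookup_hcomp sum.delta)
  then show "Poly_Mapping.lookup a w = Poly_Mapping.lookup (\<Sum>h\<in>wdeg ` Poly_Mapping.keys a. hcomp h a) w"
    by (auto simp: in_keys_iff)
qed

fun opp :: "gen \<Rightarrow> gen" where
  "opp GH = GH"
| "opp GXp1 = GXm1"
| "opp GXm1 = GXp1"
| "opp GXp2 = GXm2"
| "opp GXm2 = GXp2"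

lemma opp_opp [simp]: "opp (opp x) = x"
  by (cases x) auto

lemma opp_eq_GH_iff [simp]: "opp x = GH \<longleftrightarrow> x = GH"
  by (cases x) auto

lemma gdeg_opp: "gdeg (opp x) = (- fst (gdeg x), - snd (gdeg x))"
  by (cases x) auto

text \<open>The defining relations make \<open>X1+\<close> commute with \<open>X2-\<close> and \<open>X1-\<close> with \<open>X2+\<close>.\<close>

fun partner :: "gen \<Rightarrow> gen" where
  "partner GH = GH"
| "partner GXp1 = GXm2"
| "partner GXm2 = GXp1"
| "partner GXm1 = GXp2"
| "partner GXp2 = GXm1"

definition reduced :: "gen list \<Rightarrow> bool" where
  "reduced s \<longleftrightarrow> GH \<notin> set s \<and> \<not> (GXp1 \<in> set s \<and> GXm1 \<in> set s) \<and>
     \<not> (GXp2 \<in> set s \<and> GXm2 \<in> set s)"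

lemma reduced_subset: "reduced s \<Longrightarrow> set t \<subseteq> set s \<Longrightarrow> reduced t"
  by (auto simp: reduced_def)

lemma reduced_Cons: "reduced (x # s) \<Longrightarrow> reduced s"
  by (auto simp: reduced_def)

lemma wdeg_sign:
  "GXm1 \<notin> set s \<Longrightarrow> 0 \<le> fst (wdeg s)" "GXp1 \<notin> set s \<Longrightarrow> fst (wdeg s) \<le> 0"
  "GXm2 \<notin> set s \<Longrightarrow> 0 \<le> snd (wdeg s)" "GXp2 \<notin> set s \<Longrightarrow> snd (wdeg s) \<le> 0"
proof (induct s)
  case (Cons x s)
  { case 1 then show ?case using Cons by (cases x) auto }
  { case 2 then show ?case using Cons by (cases x) auto }
  { case 3 then show ?case using Cons by (cases x) auto }
  { case 4 then show ?case using Cons by (cases x) auto }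
qed simp_all

lemma length_reduced: "reduced s \<Longrightarrow> length s = nat \<bar>fst (wdeg s)\<bar> + nat \<bar>snd (wdeg s)\<bar>"
proof (induct s)
  case (Cons x s)
  then have "length s = nat \<bar>fst (wdeg s)\<bar> + nat \<bar>snd (wdeg s)\<bar>"
    using reduced_Cons by blast
  then show ?case
    using Cons.prems wdeg_sign[of s] by (cases x) (auto simp: reduced_def)
qed simp

lemma reduced_wdeg_0: "reduced s \<Longrightarrow> wdeg s = (0, 0) \<Longrightarrow> s = []"
  using length_reduced[of s] by simp

lemma finite_reduced: "finite {s. reduced s \<and> wdeg s = g}"
proof (rule finite_subset)
  show "{s. reduced s \<and> wdeg s = g} \<subseteq> {s. set s \<subseteq> UNIV \<and> length s = nat \<bar>fst g\<bar> + nat \<bar>snd g\<bar>}"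
    using length_reduced by auto
  have "(UNIV :: gen set) = {GH, GXp1, GXm1, GXp2, GXm2}"
    using gen.exhaust by auto
  then have "finite (UNIV :: gen set)"
    by (metis finite.emptyI finite.insertI)
  then show "finite {s. set s \<subseteq> (UNIV :: gen set) \<and> length s = nat \<bar>fst g\<bar> + nat \<bar>snd g\<bar>}"
    by (rule finite_lists_length_eq)
qed

lemma reduced_commuting_side:
  assumes "reduced s" "x \<noteq> GH" "x \<notin> set s" "opp x \<notin> set s"
  shows "(\<forall>y\<in>set s. y = partner x) \<or> (\<forall>y\<in>set s. y = partner (opp x))"
proof -
  have "y = partner x \<or> y = partner (opp x)" if "y \<in> set s" for y
  proof -
    have "y \<noteq> GH" "y \<noteq> x" "y \<noteq> opp x"
      using that assms by (auto simp: reduced_def)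
    then show ?thesis
      using assms(2) by (cases x; cases y) simp_all
  qed
  moreover have "\<not> (partner x \<in> set s \<and> partner (opp x) \<in> set s)"
    using assms(1,2) by (cases x) (auto simp: reduced_def)
  ultimately show ?thesis
    by blast
qed

lemma wdeg_replicate: "wdeg (replicate k x) = (int k * fst (gdeg x), int k * snd (gdeg x))"
  by (induct k) (auto simp: algebra_simps)

definition signed_power :: "gen \<Rightarrow> gen \<Rightarrow> int \<Rightarrow> gen list" where
  "signed_power x y k = replicate (nat \<bar>k\<bar>) (if 0 \<le> k then x else y)"

lemma signed_power_succ: "0 \<le> k \<Longrightarrow> signed_power x y (1 + k) = x # signed_power x y k"
  by (simp add: signed_power_def nat_add_distrib)

lemma signed_power_pred: "k \<le> 0 \<Longrightarrow> signed_power x y (k - 1) = y # signed_power x y k"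
proof -
  assume "k \<le> 0"
  then have "nat \<bar>k - 1\<bar> = Suc (nat \<bar>k\<bar>)"
    by simp
  then show ?thesis
    using \<open>k \<le> 0\<close> by (cases "k = 0") (simp_all add: signed_power_def)
qed

definition std_word :: "int \<times> int \<Rightarrow> gen list" where
  "std_word g = signed_power GXp1 GXm1 (fst g) @ signed_power GXp2 GXm2 (snd g)"

definition std_word_inv :: "int \<times> int \<Rightarrow> gen list" where
  "std_word_inv g = signed_power GXm2 GXp2 (snd g) @ signed_power GXm1 GXp1 (fst g)"

lemma wdeg_std_word: "wdeg (std_word g) = g"
  by (cases g) (auto simp: std_word_def signed_power_def wdeg_append wdeg_replicate)

lemma reduced_std_word: "reduced (std_word g)"
  by (auto simp: std_word_def signed_power_def reduced_def)

lemma std_word_0: "std_word (0, 0) = []"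
  by (simp add: std_word_def signed_power_def)

lemma std_word_Cons_first:
  assumes "reduced (x # s)" "x = GXp1 \<or> x = GXm1"
  shows "std_word (wdeg (x # s)) = x # std_word (wdeg s)"
  using assms wdeg_sign(1,2)[of s]
  by (auto simp: std_word_def reduced_def signed_power_succ signed_power_pred)

lemma std_word_Cons_second:
  assumes "reduced (x # s)" "x = GXp2 \<or> x = GXm2"
  shows "std_word (wdeg (x # s)) =
    signed_power GXp1 GXm1 (fst (wdeg s)) @ x # signed_power GXp2 GXm2 (snd (wdeg s))"
  using assms wdeg_sign(3,4)[of s]
  by (auto simp: std_word_def reduced_def signed_power_succ signed_power_pred)

lemma bezout_finite_family:
  fixes N :: "'b \<Rightarrow> 'a::euclidean_ring_gcd"
  assumes "finite S"
  obtains c G where "(\<Sum>s\<in>S. c s * N s) = G" "\<forall>s\<in>S. G dvd N s"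
    "(\<exists>s\<in>S. N s \<noteq> 0) \<Longrightarrow> G \<noteq> 0"
proof -
  have "\<exists>c G. (\<Sum>s\<in>S. c s * N s) = G \<and> (\<forall>s\<in>S. G dvd N s) \<and> ((\<exists>s\<in>S. N s \<noteq> 0) \<longrightarrow> G \<noteq> 0)"
    using assms
  proof (induct S rule: finite_induct)
    case empty
    show ?case by (intro exI[of _ "\<lambda>_. 0"] exI[of _ 0]) simp
  next
    case (insert t S)
    then obtain c G where cG: "(\<Sum>s\<in>S. c s * N s) = G" "\<forall>s\<in>S. G dvd N s"
      "(\<exists>s\<in>S. N s \<noteq> 0) \<longrightarrow> G \<noteq> 0"
      by blast
    obtain u v where "bezout_coefficients G (N t) = (u, v)"
      by (cases "bezout_coefficients G (N t)")
    then have uv: "u * G + v * N t = gcd G (N t)"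
      by (rule bezout_coefficients)
    define c' where "c' s = (if s = t then v else u * c s)" for s
    have "(\<Sum>s\<in>insert t S. c' s * N s) = v * N t + (\<Sum>s\<in>S. u * (c s * N s))"
      using insert.hyps by (simp add: c'_def) (intro sum.cong; auto)
    then have "(\<Sum>s\<in>insert t S. c' s * N s) = gcd G (N t)"
      using uv by (simp add: add.commute flip: sum_distrib_left cG(1))
    moreover have "\<forall>s\<in>insert t S. gcd G (N t) dvd N s"
      using cG(2) by (auto intro: dvd_trans[OF gcd_dvd1])
    moreover have "(\<exists>s\<in>insert t S. N s \<noteq> 0) \<longrightarrow> gcd G (N t) \<noteq> 0"
      using cG(3) by auto
    ultimately show ?case by blast
  qed
  then show ?thesis
    using that by blast
qed

section \<open>Computing modulo the defining relations\<close>

locale kleinian_fiber_product =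
  fixes a1 a2 :: complex and p1 p2 :: "complex poly"
begin

abbreviation rel_ideal :: "falg set" where
  "rel_ideal \<equiv> Itil a1 a2 p1 p2"

lemma rel_ideal_0: "0 \<in> rel_ideal"
  unfolding Itil_def by (rule gen_ideal.zero)

lemma rel_ideal_add: "x \<in> rel_ideal \<Longrightarrow> y \<in> rel_ideal \<Longrightarrow> x + y \<in> rel_ideal"
  unfolding Itil_def by (rule gen_ideal.add)

lemma rel_ideal_rels: "r \<in> rels a1 a2 p1 p2 \<Longrightarrow> a * r * b \<in> rel_ideal"
  using gen_ideal.gen[of r "rels a1 a2 p1 p2" a b] by (simp add: Itil_def fmul_eq_times)

lemma rel_ideal_mult_left: "x \<in> rel_ideal \<Longrightarrow> c * x \<in> rel_ideal"
  unfolding Itil_def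
proof (induct rule: gen_ideal.induct)
  case (gen r a b)
  then have "fmul (fmul (c * a) r) b \<in> gen_ideal (rels a1 a2 p1 p2)"
    by (rule gen_ideal.gen)
  then show ?case by (simp add: fmul_eq_times mult.assoc)
qed (simp_all add: distrib_left gen_ideal.zero gen_ideal.add)

lemma rel_ideal_mult_right: "x \<in> rel_ideal \<Longrightarrow> x * c \<in> rel_ideal"
  unfolding Itil_def
proof (induct rule: gen_ideal.induct)
  case (gen r a b)
  then have "fmul (fmul a r) (b * c) \<in> gen_ideal (rels a1 a2 p1 p2)"
    by (rule gen_ideal.gen)
  then show ?case by (simp add: fmul_eq_times mult.assoc)
qed (simp_all add: distrib_right gen_ideal.zero gen_ideal.add)

lemma rel_ideal_diff: "x \<in> rel_ideal \<Longrightarrow> y \<in> rel_ideal \<Longrightarrow> x - y \<in> rel_ideal"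
  using rel_ideal_add[of x "(- 1) * y"] rel_ideal_mult_left[of y "- 1"] by simp

lemma rel_ideal_sum: "(\<And>i. i \<in> S \<Longrightarrow> f i \<in> rel_ideal) \<Longrightarrow> sum f S \<in> rel_ideal"
  by (induct S rule: infinite_finite_induct) (auto simp: rel_ideal_0 rel_ideal_add)

definition cong_rel :: "falg \<Rightarrow> falg \<Rightarrow> bool" (infix "\<approx>" 50) where
  "x \<approx> y \<longleftrightarrow> x - y \<in> rel_ideal"

lemma cong_refl [simp]: "x \<approx> x"
  by (simp add: cong_rel_def rel_ideal_0)

lemma cong_sym: "x \<approx> y \<Longrightarrow> y \<approx> x"
  unfolding cong_rel_def using rel_ideal_diff[OF rel_ideal_0] by fastforce

lemma cong_trans [trans]: "x \<approx> y \<Longrightarrow> y \<approx> z \<Longrightarrow> x \<approx> z"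
  unfolding cong_rel_def using rel_ideal_add by fastforce

lemma cong_add: "a \<approx> b \<Longrightarrow> c \<approx> d \<Longrightarrow> a + c \<approx> b + d"
  unfolding cong_rel_def using rel_ideal_add by (fastforce simp: algebra_simps)

lemma cong_diff: "a \<approx> b \<Longrightarrow> c \<approx> d \<Longrightarrow> a - c \<approx> b - d"
  unfolding cong_rel_def using rel_ideal_diff by (fastforce simp: algebra_simps)

lemma cong_mult: "a \<approx> b \<Longrightarrow> c \<approx> d \<Longrightarrow> a * c \<approx> b * d"
proof -
  assume "a \<approx> b" "c \<approx> d"
  then have "(a - b) * c + b * (c - d) \<in> rel_ideal"
    unfolding cong_rel_def by (intro rel_ideal_add rel_ideal_mult_left rel_ideal_mult_right)
  then show ?thesis
    unfolding cong_rel_def by (simp add: algebra_simps)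
qed

lemma cong_mult_left: "c \<approx> d \<Longrightarrow> a * c \<approx> a * d"
  by (simp add: cong_mult)

lemma cong_mult_right: "a \<approx> b \<Longrightarrow> a * c \<approx> b * c"
  by (simp add: cong_mult)

lemma cong_sum: "(\<And>i. i \<in> S \<Longrightarrow> f i \<approx> g i) \<Longrightarrow> sum f S \<approx> sum g S"
  by (induct S rule: infinite_finite_induct) (auto simp: cong_add)

lemma rels_cong: "r \<in> rels a1 a2 p1 p2 \<Longrightarrow> r \<approx> 0"
  using rel_ideal_rels[of r 1 1] by (simp add: cong_rel_def)

definition weight :: "int \<times> int \<Rightarrow> complex" where
  "weight g = of_int (fst g) * a1 + of_int (snd g) * a2"

lemma H_fgen_comm: "fH * fgen x \<approx> fgen x * (fH + fscal (weight (gdeg x)))"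
proof -
  have rel: "fH * fgen x \<approx> fgen x * (fH + fscal c)"
    if "fH * fgen x - fgen x * fH - fscal c * fgen x \<in> rels a1 a2 p1 p2" for c
  proof -
    have "fgen x * (fH + fscal c) = fgen x * fH + fscal c * fgen x"
      by (simp add: distrib_left fscal_central)
    then show ?thesis
      using rels_cong[OF that] by (simp add: cong_rel_def diff_diff_eq)
  qed
  show ?thesis
  proof (cases x)
    case GH
    then show ?thesis by (simp add: weight_def)
  qed (rule rel; simp add: weight_def fscal_uminus; unfold rels_def fmul_eq_times diff_minus_eq_add; blast)+
qed

fun contr_poly :: "gen \<Rightarrow> complex poly" where
  "contr_poly GH = 1"
| "contr_poly GXp1 = shift (- (a1 / 2)) p1"
| "contr_poly GXm1 = shift (a1 / 2) p1"
| "contr_poly GXp2 = shift (- (a2 / 2)) p2"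
| "contr_poly GXm2 = shift (a2 / 2) p2"

lemma contr_poly_nonzero: "p1 \<noteq> 0 \<Longrightarrow> p2 \<noteq> 0 \<Longrightarrow> contr_poly x \<noteq> 0"
  by (cases x) simp_all

lemma fgen_opp_contract: "x \<noteq> GH \<Longrightarrow> fgen x * fgen (opp x) \<approx> polyH (contr_poly x)"
  using rels_cong
  by (cases x) (simp_all add: rels_def cong_rel_def fmul_eq_times peval_H_shift)

lemma fgen_partner_comm: "x \<noteq> GH \<Longrightarrow> fgen x * fgen (partner x) \<approx> fgen (partner x) * fgen x"
proof -
  have "fgen GXp1 * fgen GXm2 \<approx> fgen GXm2 * fgen GXp1"
    "fgen GXm1 * fgen GXp2 \<approx> fgen GXp2 * fgen GXm1"
    using rels_cong unfolding cong_rel_def rels_def fmul_eq_times by auto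
  then show "x \<noteq> GH \<Longrightarrow> ?thesis"
    by (cases x) (simp_all add: cong_sym)
qed

lemma weight_add [simp]: "weight (fst g + fst h, snd g + snd h) = weight g + weight h"
  by (simp add: weight_def algebra_simps)

lemma polyH_comm_of_H_comm:
  assumes "fH * X \<approx> X * (fH + fscal s)"
  shows "polyH f * X \<approx> X * polyH (shift s f)"
proof (induct f)
  case (pCons c f)
  have "polyH (pCons c f) * X = fscal c * X + fH * (polyH f * X)"
    by (simp add: polyH_pCons distrib_right mult.assoc)
  also have "\<dots> \<approx> fscal c * X + fH * (X * polyH (shift s f))"
    by (intro cong_add cong_mult_left pCons.hyps cong_refl)
  also have "\<dots> = fscal c * X + (fH * X) * polyH (shift s f)"
    by (simp add: mult.assoc)
  also have "\<dots> \<approx> fscal c * X + (X * (fH + fscal s)) * polyH (shift s f)"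
    by (intro cong_add cong_mult_right assms cong_refl)
  also have "\<dots> = X * (fscal c + (fscal s + fH) * polyH (shift s f))"
    by (simp add: distrib_left distrib_right mult.assoc fscal_central[of c X] add_ac)
  also have "fscal c + (fscal s + fH) * polyH (shift s f) = polyH (shift s (pCons c f))"
    by (simp only: shift_def pcompose_pCons polyH_add polyH_mult polyH_linear polyH_const)
  finally show ?case .
qed (simp add: shift_def)

lemma H_word_comm: "fH * word w \<approx> word w * (fH + fscal (weight (wdeg w)))"
proof (induct w)
  case (Cons x w)
  have "fH * word (x # w) = (fH * fgen x) * word w"
    by (simp add: word_Cons mult.assoc)
  also have "\<dots> \<approx> (fgen x * (fH + fscal (weight (gdeg x)))) * word w"
    by (intro cong_mult_right H_fgen_comm)
  also have "\<dots> = fgen x * (fH * word w) + fgen x * word w * fscal (weight (gdeg x))"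
    by (simp add: distrib_left distrib_right mult.assoc fscal_central[of _ "word w"])
  also have "\<dots> \<approx> fgen x * (word w * (fH + fscal (weight (wdeg w)))) +
      fgen x * word w * fscal (weight (gdeg x))"
    by (intro cong_add cong_mult_left Cons cong_refl)
  also have "\<dots> = word (x # w) * (fH + fscal (weight (wdeg (x # w))))"
    by (simp add: word_Cons fscal_add distrib_left mult.assoc add_ac)
  finally show ?case .
qed (simp add: weight_def)

lemma H_Hom_comm:
  assumes "d \<in> Hom g"
  shows "fH * d \<approx> d * (fH + fscal (weight g))"
proof -
  let ?c = "Poly_Mapping.lookup d"
  have "fH * d = (\<Sum>w\<in>Poly_Mapping.keys d. fscal (?c w) * (fH * word w))"
    by (subst sum_scaled_words)
       (simp add: sum_distrib_left fscal_central[of _ fH, symmetric] flip: mult.assoc)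
  also have "\<dots> \<approx> (\<Sum>w\<in>Poly_Mapping.keys d. fscal (?c w) * (word w * (fH + fscal (weight g))))"
  proof (rule cong_sum)
    fix w assume "w \<in> Poly_Mapping.keys d"
    then have "wdeg w = g"
      using assms by (simp add: Hom_def)
    then show "fscal (?c w) * (fH * word w) \<approx> fscal (?c w) * (word w * (fH + fscal (weight g)))"
      using H_word_comm[of w] by (intro cong_mult_left) simp
  qed
  also have "\<dots> = d * (fH + fscal (weight g))"
    by (subst (2) sum_scaled_words) (simp add: sum_distrib_right mult.assoc)
  finally show ?thesis .
qed

lemma polyH_Hom_comm: "d \<in> Hom g \<Longrightarrow> polyH f * d \<approx> d * polyH (shift (weight g) f)"
  by (rule polyH_comm_of_H_comm[OF H_Hom_comm])

lemma Hom_polyH_comm: "d \<in> Hom g \<Longrightarrow> d * polyH f \<approx> polyH (shift (- weight g) f) * d"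
  using polyH_Hom_comm[of d g "shift (- weight g) f"] by (simp add: cong_sym)

lemma word_polyH_comm: "word w * polyH f \<approx> polyH (shift (- weight (wdeg w)) f) * word w"
  by (rule Hom_polyH_comm[OF Hom_word])

lemma fgen_polyH_comm: "fgen x * polyH f \<approx> polyH (shift (- weight (gdeg x)) f) * fgen x"
  by (rule Hom_polyH_comm[OF Hom_fgen])

section \<open>The torsion ideal\<close>

definition torsion :: "falg set" where
  "torsion = {a. \<exists>f. f \<noteq> 0 \<and> polyH f * a \<in> rel_ideal}"

lemma Jker_eq_torsion: "Jker a1 a2 p1 p2 = torsion"
  by (simp add: Jker_def torsion_def fmul_eq_times polyH_def)

lemma torsionI: "f \<noteq> 0 \<Longrightarrow> polyH f * a \<in> rel_ideal \<Longrightarrow> a \<in> torsion"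
  unfolding torsion_def by blast

lemma torsionE:
  assumes "a \<in> torsion"
  obtains f where "f \<noteq> 0" "polyH f * a \<in> rel_ideal"
  using assms unfolding torsion_def by blast

lemma rel_ideal_torsion: "a \<in> rel_ideal \<Longrightarrow> a \<in> torsion"
  by (rule torsionI[of 1]) simp_all

lemma torsion_add:
  assumes "a \<in> torsion" "b \<in> torsion"
  shows "a + b \<in> torsion"
proof -
  obtain f where f: "f \<noteq> 0" "polyH f * a \<in> rel_ideal"
    using assms(1) by (rule torsionE)
  obtain g where g: "g \<noteq> 0" "polyH g * b \<in> rel_ideal"
    using assms(2) by (rule torsionE)
  have "polyH g * (polyH f * a) + polyH f * (polyH g * b) \<in> rel_ideal"
    using rel_ideal_add[OF rel_ideal_mult_left[OF f(2)] rel_ideal_mult_left[OF g(2)]] .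
  then have "polyH (g * f) * (a + b) \<in> rel_ideal"
    by (simp add: polyH_mult distrib_left mult.assoc polyH_commute[of g f] flip: mult.assoc)
  then show ?thesis
    using f(1) g(1) by (intro torsionI[of "g * f"]) simp_all
qed

lemma torsion_sum: "(\<And>i. i \<in> S \<Longrightarrow> f i \<in> torsion) \<Longrightarrow> sum f S \<in> torsion"
  by (induct S rule: infinite_finite_induct)
     (auto simp: torsion_add rel_ideal_torsion[OF rel_ideal_0])

lemma torsion_mult_right: "a \<in> torsion \<Longrightarrow> a * c \<in> torsion"
  by (erule torsionE, rule torsionI) (auto simp: mult.assoc[symmetric] intro: rel_ideal_mult_right)

lemma torsion_polyH_mult: "a \<in> torsion \<Longrightarrow> polyH q * a \<in> torsion"
proof (erule torsionE)
  fix f assume "f \<noteq> 0" "polyH f * a \<in> rel_ideal"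
  then have "polyH f * (polyH q * a) \<in> rel_ideal"
    using rel_ideal_mult_left[of "polyH f * a" "polyH q"]
    by (simp add: polyH_commute[of q f] flip: mult.assoc)
  then show ?thesis
    by (rule torsionI[OF \<open>f \<noteq> 0\<close>])
qed

lemma torsion_fscal_mult: "a \<in> torsion \<Longrightarrow> fscal c * a \<in> torsion"
  using torsion_polyH_mult[of a "[:c:]"] by simp

lemma cong_torsion: "a \<approx> b \<Longrightarrow> a \<in> torsion \<longleftrightarrow> b \<in> torsion"
proof -
  have "b \<in> torsion" if "a \<approx> b" "a \<in> torsion" for a b
  proof -
    have "b - a \<in> rel_ideal"
      using cong_sym[OF that(1)] by (simp add: cong_rel_def)
    then have "(b - a) + a \<in> torsion"
      using torsion_add[OF rel_ideal_torsion that(2)] by blast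
    then show ?thesis by simp
  qed
  then show "a \<approx> b \<Longrightarrow> ?thesis"
    using cong_sym by blast
qed

lemma torsion_cancel_polyH: "f \<noteq> 0 \<Longrightarrow> polyH f * a \<in> torsion \<Longrightarrow> a \<in> torsion"
  by (erule torsionE, rule torsionI[of "_ * f"]) (simp_all add: polyH_mult mult.assoc)

lemma torsion_Hom_mult:
  assumes "d \<in> Hom g" "a \<in> torsion"
  shows "d * a \<in> torsion"
proof -
  obtain f where f: "f \<noteq> 0" "polyH f * a \<in> rel_ideal"
    using assms(2) by (rule torsionE)
  let ?f' = "shift (- weight g) f"
  have "d * (polyH f * a) - (d * polyH f - polyH ?f' * d) * a \<in> rel_ideal"
    using rel_ideal_diff[OF rel_ideal_mult_left[OF f(2)] rel_ideal_mult_right]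
      Hom_polyH_comm[OF assms(1), of f]
    by (simp add: cong_rel_def)
  then have "polyH ?f' * (d * a) \<in> rel_ideal"
    by (simp add: algebra_simps)
  then show ?thesis
    using f(1) by (intro torsionI) simp_all
qed

section \<open>Reduction to standard monomials\<close>

lemma partner_word_comm:
  assumes "z \<noteq> GH" "\<forall>y\<in>set u. y = partner z"
  shows "fgen z * word u \<approx> word u * fgen z"
  using assms(2)
proof (induct u)
  case (Cons y u)
  have "fgen z * word (y # u) = (fgen z * fgen y) * word u"
    by (simp add: word_Cons mult.assoc)
  also have "\<dots> \<approx> (fgen y * fgen z) * word u"
    using Cons.prems fgen_partner_comm[OF assms(1)] by (intro cong_mult_right) simp
  also have "\<dots> = fgen y * (fgen z * word u)"
    by (simp add: mult.assoc)
  also have "\<dots> \<approx> fgen y * (word u * fgen z)"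
    using Cons by (intro cong_mult_left) simp
  also have "\<dots> = word (y # u) * fgen z"
    by (simp add: word_Cons mult.assoc)
  finally show ?case .
qed simp

lemma fgen_contract_opp:
  assumes "x \<noteq> GH" and pre: "(\<forall>y\<in>set pre. y = partner x) \<or> (\<forall>y\<in>set pre. y = partner (opp x))"
  obtains c where "fgen x * word (pre @ opp x # post) \<approx> polyH c * word (pre @ post)"
proof -
  have contract: "fgen x * fgen (opp x) \<approx> polyH (contr_poly x)"
    using assms(1) by (rule fgen_opp_contract)
  show ?thesis
  proof (cases "\<forall>y\<in>set pre. y = partner x")
    case True
    let ?c = "shift (- weight (wdeg pre)) (contr_poly x)"
    have "fgen x * word (pre @ opp x # post) = (fgen x * word pre) * (fgen (opp x) * word post)"
      by (simp add: word_append word_Cons mult.assoc)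
    also have "\<dots> \<approx> (word pre * fgen x) * (fgen (opp x) * word post)"
      using partner_word_comm[OF assms(1) True] by (rule cong_mult_right)
    also have "\<dots> = word pre * (fgen x * fgen (opp x)) * word post"
      by (simp add: mult.assoc)
    also have "\<dots> \<approx> word pre * polyH (contr_poly x) * word post"
      by (intro cong_mult_right cong_mult_left contract)
    also have "\<dots> \<approx> polyH ?c * word pre * word post"
      by (intro cong_mult_right word_polyH_comm)
    also have "\<dots> = polyH ?c * word (pre @ post)"
      by (simp add: word_append mult.assoc)
    finally show ?thesis
      by (rule that)
  next
    case False
    then have "\<forall>y\<in>set pre. y = partner (opp x)"
      using pre by blast
    then have comm: "word pre * fgen (opp x) \<approx> fgen (opp x) * word pre"
      using assms(1) by (intro cong_sym[OF partner_word_comm]) simp_all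
    have "fgen x * word (pre @ opp x # post) = fgen x * ((word pre * fgen (opp x)) * word post)"
      by (simp add: word_append word_Cons mult.assoc)
    also have "\<dots> \<approx> fgen x * ((fgen (opp x) * word pre) * word post)"
      using comm by (intro cong_mult_left[OF cong_mult_right])
    also have "\<dots> = (fgen x * fgen (opp x)) * word (pre @ post)"
      by (simp add: word_append mult.assoc)
    also have "\<dots> \<approx> polyH (contr_poly x) * word (pre @ post)"
      using contract by (rule cong_mult_right)
    finally show ?thesis
      by (rule that)
  qed
qed

text \<open>Prepending a letter to a reduced word either keeps it reduced or, after commuting the letter
  to its opposite, contracts the pair to a polynomial in \<open>H\<close>.\<close>

lemma reduce_Cons:
  assumes "reduced s"
  obtains c s' where "reduced s'" "wdeg s' = wdeg (x # s)" "fgen x * word s \<approx> polyH c * word s'"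
proof -
  consider "x = GH" | "x \<noteq> GH" "opp x \<notin> set s" | "x \<noteq> GH" "opp x \<in> set s"
    by blast
  then show ?thesis
  proof cases
    case 1
    then show ?thesis
      using that[of s "[:0, 1:]"] assms polyH_linear[of 0] by simp
  next
    case 2
    then have "reduced (x # s)"
      using assms by (cases x) (simp_all add: reduced_def)
    then show ?thesis
      using that[of "x # s" 1] by (simp add: word_Cons)
  next
    case 3
    then obtain pre post where s: "s = pre @ opp x # post" and "opp x \<notin> set pre"
      by (metis split_list_first)
    have "x \<notin> set s"
      using assms 3 by (cases x) (simp_all add: reduced_def)
    then have "(\<forall>y\<in>set pre. y = partner x) \<or> (\<forall>y\<in>set pre. y = partner (opp x))"
      using reduced_subset[OF assms, of pre] \<open>opp x \<notin> set pre\<close> 3(1)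
      by (intro reduced_commuting_side) (auto simp: s)
    then obtain c where "fgen x * word s \<approx> polyH c * word (pre @ post)"
      using fgen_contract_opp[OF 3(1)] unfolding s by blast
    moreover have "reduced (pre @ post)"
      by (rule reduced_subset[OF assms]) (auto simp: s)
    moreover have "wdeg (pre @ post) = wdeg (x # s)"
      by (simp add: s wdeg_append gdeg_opp)
    ultimately show ?thesis
      using that by blast
  qed
qed

lemma reduce_word:
  obtains c s where "reduced s" "wdeg s = wdeg w" "word w \<approx> polyH c * word s"
proof (induct w arbitrary: thesis)
  case Nil
  then show ?case
    using Nil[of "[]" 1] by (simp add: reduced_def)
next
  case (Cons x w)
  obtain c s where cs: "reduced s" "wdeg s = wdeg w" "word w \<approx> polyH c * word s"
    using Cons.hyps by blast
  obtain c' s' where cs': "reduced s'" "wdeg s' = wdeg (x # s)" "fgen x * word s \<approx> polyH c' * word s'"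
    using reduce_Cons[OF cs(1)] by blast
  let ?c = "shift (- weight (gdeg x)) c"
  have "word (x # w) = fgen x * word w"
    by (simp add: word_Cons)
  also have "\<dots> \<approx> fgen x * (polyH c * word s)"
    using cs(3) by (rule cong_mult_left)
  also have "\<dots> = (fgen x * polyH c) * word s"
    by (simp add: mult.assoc)
  also have "\<dots> \<approx> (polyH ?c * fgen x) * word s"
    by (intro cong_mult_right fgen_polyH_comm)
  also have "\<dots> = polyH ?c * (fgen x * word s)"
    by (simp add: mult.assoc)
  also have "\<dots> \<approx> polyH ?c * (polyH c' * word s')"
    using cs'(3) by (rule cong_mult_left)
  also have "\<dots> = polyH (?c * c') * word s'"
    by (simp add: polyH_mult mult.assoc)
  finally show ?case
    using Cons.prems cs'(1,2) cs(2) by simp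
qed

text \<open>\<open>a\<close> is a multiple of \<open>b\<close> over the fraction field of \<open>\<complex>[H]\<close>, modulo the relations.\<close>

definition rat_multiple :: "falg \<Rightarrow> falg \<Rightarrow> bool" where
  "rat_multiple a b \<longleftrightarrow> (\<exists>D N. D \<noteq> 0 \<and> polyH D * a \<approx> polyH N * b)"

lemma rat_multipleI: "a \<approx> polyH c * b \<Longrightarrow> rat_multiple a b"
  unfolding rat_multiple_def by (intro exI[of _ 1] exI[of _ c]) simp

lemma rat_multiple_trans:
  assumes "rat_multiple a b" "rat_multiple b c"
  shows "rat_multiple a c"
proof -
  obtain D N where DN: "D \<noteq> 0" "polyH D * a \<approx> polyH N * b"
    using assms(1) by (auto simp: rat_multiple_def)
  obtain D' N' where DN': "D' \<noteq> 0" "polyH D' * b \<approx> polyH N' * c"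
    using assms(2) by (auto simp: rat_multiple_def)
  have "polyH (D' * D) * a = polyH D' * (polyH D * a)"
    by (simp add: polyH_mult mult.assoc)
  also have "\<dots> \<approx> polyH D' * (polyH N * b)"
    using DN(2) by (rule cong_mult_left)
  also have "\<dots> = polyH N * (polyH D' * b)"
    by (simp add: polyH_commute[of D' N] flip: mult.assoc)
  also have "\<dots> \<approx> polyH N * (polyH N' * c)"
    using DN'(2) by (rule cong_mult_left)
  also have "\<dots> = polyH (N * N') * c"
    by (simp add: polyH_mult mult.assoc)
  finally have "polyH (D' * D) * a \<approx> polyH (N * N') * c" .
  moreover have "D' * D \<noteq> 0"
    using DN(1) DN'(1) by simp
  ultimately show ?thesis
    unfolding rat_multiple_def by blast
qed

lemma rat_multiple_mult_right: "rat_multiple a b \<Longrightarrow> rat_multiple (a * c) (b * c)"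
  unfolding rat_multiple_def by (metis cong_mult_right mult.assoc)

lemma rat_multiple_Hom_mult_left:
  assumes "d \<in> Hom g" "rat_multiple a b"
  shows "rat_multiple (d * a) (d * b)"
proof -
  obtain D N where DN: "D \<noteq> 0" "polyH D * a \<approx> polyH N * b"
    using assms(2) by (auto simp: rat_multiple_def)
  let ?D = "shift (- weight g) D" and ?N = "shift (- weight g) N"
  have "polyH ?D * (d * a) = (polyH ?D * d) * a"
    by (simp add: mult.assoc)
  also have "\<dots> \<approx> (d * polyH D) * a"
    using polyH_Hom_comm[OF assms(1), of ?D] by (intro cong_mult_right) simp
  also have "\<dots> = d * (polyH D * a)"
    by (simp add: mult.assoc)
  also have "\<dots> \<approx> d * (polyH N * b)"
    using DN(2) by (rule cong_mult_left)
  also have "\<dots> = (d * polyH N) * b"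
    by (simp add: mult.assoc)
  also have "\<dots> \<approx> (polyH ?N * d) * b"
    using Hom_polyH_comm[OF assms(1), of N] by (rule cong_mult_right)
  also have "\<dots> = polyH ?N * (d * b)"
    by (simp add: mult.assoc)
  finally have "polyH ?D * (d * a) \<approx> polyH ?N * (d * b)" .
  moreover have "?D \<noteq> 0"
    using DN(1) by simp
  ultimately show ?thesis
    unfolding rat_multiple_def by blast
qed

text \<open>Insert \<open>y (opp y)\<close> on the left, commute, and contract \<open>(opp y) y\<close> on the right.\<close>

lemma rat_multiple_swap_nonpartner:
  assumes "y \<noteq> GH" "x = partner (opp y)" "contr_poly y \<noteq> 0"
  shows "rat_multiple (fgen x * fgen y) (fgen y * fgen x)"
proof -
  let ?c = "shift (- weight (wdeg [y, x])) (contr_poly (opp y))"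
  have "polyH (contr_poly y) * (fgen x * fgen y) \<approx> (fgen y * fgen (opp y)) * (fgen x * fgen y)"
    using cong_mult_right[OF cong_sym[OF fgen_opp_contract[OF assms(1)]]] .
  also have "\<dots> = fgen y * (fgen (opp y) * fgen x) * fgen y"
    by (simp add: mult.assoc)
  also have "\<dots> \<approx> fgen y * (fgen x * fgen (opp y)) * fgen y"
    using cong_mult_right[OF cong_mult_left[OF fgen_partner_comm[of "opp y"]]] assms(1,2)
    by simp
  also have "\<dots> = word [y, x] * (fgen (opp y) * fgen y)"
    by (simp add: word_Cons mult.assoc)
  also have "\<dots> \<approx> word [y, x] * polyH (contr_poly (opp y))"
    using cong_mult_left[OF fgen_opp_contract[of "opp y"]] assms(1) by simp
  also have "\<dots> \<approx> polyH ?c * (fgen y * fgen x)"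
    using word_polyH_comm[of "[y, x]"] by (simp add: word_Cons)
  finally show ?thesis
    using assms(3) unfolding rat_multiple_def by blast
qed

lemma rat_multiple_swap:
  assumes "y = GXp1 \<or> y = GXm1" "x = GXp2 \<or> x = GXm2" "p1 \<noteq> 0"
  shows "rat_multiple (fgen x * fgen y) (fgen y * fgen x)"
proof (cases "x = partner y")
  case True
  then show ?thesis
    using cong_sym[OF fgen_partner_comm[of y]] assms(1) by (intro rat_multipleI[of _ 1]) auto
next
  case False
  then have "x = partner (opp y)"
    using assms(1,2) by auto
  then show ?thesis
    using assms by (intro rat_multiple_swap_nonpartner) auto
qed

lemma rat_multiple_swap_power:
  assumes "rat_multiple (fgen x * fgen y) (fgen y * fgen x)"
  shows "rat_multiple (fgen x * word (replicate k y)) (word (replicate k y) * fgen x)"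
proof (induct k)
  case 0
  then show ?case by (intro rat_multipleI[of _ 1]) simp
next
  case (Suc k)
  let ?Y = "word (replicate k y)"
  have "rat_multiple ((fgen x * fgen y) * ?Y) ((fgen y * fgen x) * ?Y)"
    using assms by (rule rat_multiple_mult_right)
  moreover have "rat_multiple (fgen y * (fgen x * ?Y)) (fgen y * (?Y * fgen x))"
    using Hom_fgen Suc by (rule rat_multiple_Hom_mult_left)
  ultimately show ?case
    by (simp add: word_Cons rat_multiple_trans mult.assoc)
qed

lemma rat_multiple_std_word_Cons:
  assumes "reduced (x # s)" "p1 \<noteq> 0"
  shows "rat_multiple (fgen x * word (std_word (wdeg s))) (word (std_word (wdeg (x # s))))"
proof -
  have "x \<noteq> GH"
    using assms(1) by (auto simp: reduced_def)
  then consider "x = GXp1 \<or> x = GXm1" | "x = GXp2 \<or> x = GXm2"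
    by (cases x) auto
  then show ?thesis
  proof cases
    case 1
    then show ?thesis
      using std_word_Cons_first[OF assms(1)] by (intro rat_multipleI[of _ 1]) (simp add: word_Cons)
  next
    case 2
    let ?P1 = "signed_power GXp1 GXm1 (fst (wdeg s))"
    let ?P2 = "signed_power GXp2 GXm2 (snd (wdeg s))"
    have "rat_multiple (fgen x * word ?P1) (word ?P1 * fgen x)"
      unfolding signed_power_def using 2 assms(2)
      by (intro rat_multiple_swap_power rat_multiple_swap) auto
    then have "rat_multiple (fgen x * word ?P1 * word ?P2) (word ?P1 * fgen x * word ?P2)"
      by (rule rat_multiple_mult_right)
    then show ?thesis
      using std_word_Cons_second[OF assms(1) 2]
      by (simp add: std_word_def word_append word_Cons mult.assoc)
  qed
qed

lemma rat_multiple_std_word: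
  assumes "reduced s" "p1 \<noteq> 0"
  shows "rat_multiple (word s) (word (std_word (wdeg s)))"
  using assms(1)
proof (induct s)
  case Nil
  then show ?case
    by (intro rat_multipleI[of _ 1]) (simp add: std_word_0)
next
  case (Cons x s)
  have "rat_multiple (fgen x * word s) (fgen x * word (std_word (wdeg s)))"
    using Hom_fgen Cons.hyps[OF reduced_Cons[OF Cons.prems]] by (rule rat_multiple_Hom_mult_left)
  then show ?case
    using rat_multiple_std_word_Cons[OF Cons.prems assms(2)]
    by (simp add: word_Cons rat_multiple_trans)
qed

definition cong_polyH_nonzero :: "falg \<Rightarrow> bool" where
  "cong_polyH_nonzero X \<longleftrightarrow> (\<exists>r. r \<noteq> 0 \<and> X \<approx> polyH r)"

lemma cong_polyH_nonzero_sandwich: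
  assumes "cong_polyH_nonzero X" "cong_polyH_nonzero (word u * word v)"
  shows "cong_polyH_nonzero (word u * X * word v)"
proof -
  obtain r where r: "r \<noteq> 0" "X \<approx> polyH r"
    using assms(1) by (auto simp: cong_polyH_nonzero_def)
  obtain r' where r': "r' \<noteq> 0" "word u * word v \<approx> polyH r'"
    using assms(2) by (auto simp: cong_polyH_nonzero_def)
  let ?r = "shift (- weight (wdeg u)) r"
  have "word u * X * word v \<approx> word u * polyH r * word v"
    using r(2) by (intro cong_mult_right cong_mult_left)
  also have "\<dots> \<approx> polyH ?r * word u * word v"
    by (intro cong_mult_right word_polyH_comm)
  also have "\<dots> = polyH ?r * (word u * word v)"
    by (simp add: mult.assoc)
  also have "\<dots> \<approx> polyH ?r * polyH r'"
    using r'(2) by (rule cong_mult_left)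
  also have "\<dots> = polyH (?r * r')"
    by (simp add: polyH_mult)
  finally show ?thesis
    using r(1) r'(1) unfolding cong_polyH_nonzero_def by (intro exI[of _ "?r * r'"]) simp
qed

lemma cong_polyH_nonzero_opp_power:
  assumes "x \<noteq> GH" "p1 \<noteq> 0" "p2 \<noteq> 0"
  shows "cong_polyH_nonzero (word (replicate k (opp x)) * word (replicate k x))"
proof (induct k)
  case 0
  then show ?case
    unfolding cong_polyH_nonzero_def by (intro exI[of _ 1]) simp
next
  case (Suc k)
  have "cong_polyH_nonzero (word [opp x] * word [x])"
    using fgen_opp_contract[of "opp x"] contr_poly_nonzero[OF assms(2,3), of "opp x"] assms(1)
    unfolding cong_polyH_nonzero_def by (auto simp: word_single)
  then have "cong_polyH_nonzero (word [opp x] * (word (replicate k (opp x)) * word (replicate k x)) *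
      word [x])"
    by (rule cong_polyH_nonzero_sandwich[OF Suc])
  moreover have "replicate (Suc k) x = replicate k x @ [x]"
    by (simp add: replicate_append_same)
  ultimately show ?case
    by (simp add: word_append word_Cons mult.assoc)
qed

lemma cong_polyH_nonzero_std_word_inv:
  assumes "p1 \<noteq> 0" "p2 \<noteq> 0"
  shows "cong_polyH_nonzero (word (std_word_inv g) * word (std_word g))"
    and "cong_polyH_nonzero (word (std_word g) * word (std_word_inv g))"
proof -
  define x1 where "x1 = (if 0 \<le> fst g then GXp1 else GXm1)"
  define x2 where "x2 = (if 0 \<le> snd g then GXp2 else GXm2)"
  let ?A = "replicate (nat \<bar>fst g\<bar>) x1" and ?B = "replicate (nat \<bar>snd g\<bar>) x2"
  let ?A' = "replicate (nat \<bar>fst g\<bar>) (opp x1)" and ?B' = "replicate (nat \<bar>snd g\<bar>) (opp x2)"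
  have words: "std_word g = ?A @ ?B" "std_word_inv g = ?B' @ ?A'"
    by (simp_all add: std_word_def std_word_inv_def signed_power_def x1_def x2_def)
  have GH: "x1 \<noteq> GH" "x2 \<noteq> GH" "opp x1 \<noteq> GH" "opp x2 \<noteq> GH"
    by (simp_all add: x1_def x2_def)
  have "cong_polyH_nonzero (word ?B' * (word ?A' * word ?A) * word ?B)"
    using cong_polyH_nonzero_sandwich cong_polyH_nonzero_opp_power assms GH by blast
  then show "cong_polyH_nonzero (word (std_word_inv g) * word (std_word g))"
    by (simp add: words word_append mult.assoc)
  have "cong_polyH_nonzero (word ?A * (word ?B * word ?B') * word ?A')"
    using cong_polyH_nonzero_sandwich cong_polyH_nonzero_opp_power[of "opp _"] assms GH
    by (metis opp_opp)
  then show "cong_polyH_nonzero (word (std_word g) * word (std_word_inv g))"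
    by (simp add: words word_append mult.assoc)
qed

section \<open>The gradation\<close>

lemma rel_ideal_hcomp: "x \<in> rel_ideal \<Longrightarrow> hcomp g x \<in> rel_ideal"
  unfolding Itil_def
proof (induct rule: gen_ideal.induct)
  case zero
  show ?case using rel_ideal_0 hcomp_of_Hom[OF Hom_0] by (simp add: Itil_def)
next
  case (add x y)
  then show ?case by (simp add: hcomp_add gen_ideal.add)
next
  case (gen r a b)
  obtain d where d: "r \<in> Hom d"
    using rels_homogeneous[OF gen] by blast
  let ?A = "wdeg ` Poly_Mapping.keys a" and ?B = "wdeg ` Poly_Mapping.keys b"
  have "fmul (fmul a r) b = (\<Sum>h\<in>?A. \<Sum>k\<in>?B. hcomp h a * r * hcomp k b)"
    by (subst sum_hcomp[of a], subst sum_hcomp[of b])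
       (simp add: fmul_eq_times sum_distrib_left sum_distrib_right, rule sum.swap)
  then have "hcomp g (fmul (fmul a r) b) = (\<Sum>h\<in>?A. \<Sum>k\<in>?B. hcomp g (hcomp h a * r * hcomp k b))"
    by (simp add: hcomp_sum)
  also have "\<dots> \<in> rel_ideal"
  proof (intro rel_ideal_sum)
    fix h k
    have "hcomp h a * r * hcomp k b \<in> Hom (fst h + fst d + fst k, snd h + snd d + snd k)"
      using Hom_mult[OF Hom_mult[OF hcomp_Hom d] hcomp_Hom] by (simp add: add.assoc)
    then show "hcomp g (hcomp h a * r * hcomp k b) \<in> rel_ideal"
      using rel_ideal_rels[OF gen] rel_ideal_0 by (simp add: hcomp_of_Hom)
  qed
  finally show ?case unfolding Itil_def .
qed

lemma graded_torsion: "graded_quot torsion"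
  unfolding graded_quot_def
proof (intro allI impI ballI)
  fix x :: "int \<times> int \<Rightarrow> falg" and S g0
  assume "finite S" "\<forall>g\<in>S. x g \<in> Hom g" "(\<Sum>g\<in>S. x g) \<in> torsion" "g0 \<in> S"
  obtain f where f: "f \<noteq> 0" "polyH f * (\<Sum>g\<in>S. x g) \<in> rel_ideal"
    using \<open>(\<Sum>g\<in>S. x g) \<in> torsion\<close> by (rule torsionE)
  have "hcomp g0 (polyH f * (\<Sum>g\<in>S. x g)) = (\<Sum>g\<in>S. hcomp g0 (polyH f * x g))"
    by (simp add: sum_distrib_left hcomp_sum)
  also have "\<dots> = (\<Sum>g\<in>S. if g = g0 then polyH f * x g else 0)"
    using \<open>\<forall>g\<in>S. x g \<in> Hom g\<close>
    by (intro sum.cong refl) (simp add: hcomp_of_Hom Hom_mult_degree0_left Hom_polyH)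
  also have "\<dots> = polyH f * x g0"
    using \<open>finite S\<close> \<open>g0 \<in> S\<close> by (simp add: sum.delta')
  finally show "x g0 \<in> torsion"
    using rel_ideal_hcomp[OF f(2), of g0] f(1) by (auto intro: torsionI)
qed

section \<open>Crystallinity\<close>

lemma Hom_degree0_cong_polyH:
  assumes "e \<in> Hom (0, 0)"
  obtains E where "e \<approx> polyH E"
proof -
  have "\<forall>w\<in>Poly_Mapping.keys e. \<exists>c. word w \<approx> polyH c"
  proof
    fix w assume w: "w \<in> Poly_Mapping.keys e"
    obtain c s where cs: "reduced s" "wdeg s = wdeg w" "word w \<approx> polyH c * word s"
      by (rule reduce_word)
    moreover have "wdeg w = (0, 0)"
      using w assms by (simp add: Hom_def)
    ultimately have "s = []"
      using reduced_wdeg_0 by simp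
    then show "\<exists>c. word w \<approx> polyH c"
      using cs(3) by auto
  qed
  then obtain C where C: "\<forall>w\<in>Poly_Mapping.keys e. word w \<approx> polyH (C w)"
    by (metis bchoice)
  have "e = (\<Sum>w\<in>Poly_Mapping.keys e. fscal (Poly_Mapping.lookup e w) * word w)"
    by (rule sum_scaled_words)
  also have "\<dots> \<approx> (\<Sum>w\<in>Poly_Mapping.keys e. fscal (Poly_Mapping.lookup e w) * polyH (C w))"
    using C by (intro cong_sum cong_mult_left) auto
  also have "\<dots> = polyH (\<Sum>w\<in>Poly_Mapping.keys e. smult (Poly_Mapping.lookup e w) (C w))"
    by (simp add: polyH_sum polyH_smult)
  finally show ?thesis
    by (rule that)
qed

lemma Hom_left_span:
  assumes span: "\<forall>s. reduced s \<and> wdeg s = g \<longrightarrow> (\<exists>q. word s - polyH q * a \<in> torsion)"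
    and d: "d \<in> Hom g"
  obtains E where "d - polyH E * a \<in> torsion"
proof -
  have "\<forall>w\<in>Poly_Mapping.keys d. \<exists>Q. word w - polyH Q * a \<in> torsion"
  proof
    fix w assume w: "w \<in> Poly_Mapping.keys d"
    obtain c s where cs: "reduced s" "wdeg s = wdeg w" "word w \<approx> polyH c * word s"
      by (rule reduce_word)
    moreover have "wdeg w = g"
      using w d by (simp add: Hom_def)
    ultimately obtain q where q: "word s - polyH q * a \<in> torsion"
      using span by blast
    have "(word w - polyH c * word s) + polyH c * (word s - polyH q * a) \<in> torsion"
      using cs(3) torsion_add[OF rel_ideal_torsion torsion_polyH_mult[OF q]]
      unfolding cong_rel_def by blast
    also have "(word w - polyH c * word s) + polyH c * (word s - polyH q * a) =
        word w - polyH (c * q) * a"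
      by (simp add: right_diff_distrib polyH_mult mult.assoc)
    finally show "\<exists>Q. word w - polyH Q * a \<in> torsion" by blast
  qed
  then obtain Q where Q: "\<forall>w\<in>Poly_Mapping.keys d. word w - polyH (Q w) * a \<in> torsion"
    by (metis bchoice)
  let ?c = "Poly_Mapping.lookup d"
  have "d - polyH (\<Sum>w\<in>Poly_Mapping.keys d. smult (?c w) (Q w)) * a =
      (\<Sum>w\<in>Poly_Mapping.keys d. fscal (?c w) * (word w - polyH (Q w) * a))"
    by (subst (1) sum_scaled_words)
       (simp add: polyH_sum polyH_smult sum_distrib_right mult.assoc right_diff_distrib sum_subtractf)
  also have "\<dots> \<in> torsion"
    using Q by (intro torsion_sum torsion_fscal_mult) auto
  finally show ?thesis
    by (rule that)
qed

lemma rat_multiple_common_denominator: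
  fixes x :: "'i \<Rightarrow> falg"
  assumes "finite S" "\<forall>s\<in>S. rat_multiple (x s) b" "s0 \<in> S" "x s0 = b"
  obtains D N where "D \<noteq> 0" "\<forall>s\<in>S. polyH D * x s \<approx> polyH (N s) * b" "N s0 \<noteq> 0"
proof -
  have "\<forall>s\<in>S. \<exists>DN. fst DN \<noteq> 0 \<and> polyH (fst DN) * x s \<approx> polyH (snd DN) * b"
    using assms(2) by (auto simp: rat_multiple_def)
  then obtain DN where DN: "\<forall>s\<in>S. fst (DN s) \<noteq> 0 \<and> polyH (fst (DN s)) * x s \<approx> polyH (snd (DN s)) * b"
    by (metis bchoice)
  define Ds where "Ds s = (if s = s0 then 1 else fst (DN s))" for s
  define Ns where "Ns s = (if s = s0 then 1 else snd (DN s))" for s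
  have Ds: "Ds s \<noteq> 0" "polyH (Ds s) * x s \<approx> polyH (Ns s) * b" if "s \<in> S" for s
    using DN that assms(4) by (auto simp: Ds_def Ns_def)
  define D where "D = (\<Prod>s\<in>S. Ds s)"
  define N where "N s = Ns s * (\<Prod>t\<in>S - {s}. Ds t)" for s
  have "polyH D * x s \<approx> polyH (N s) * b" if s: "s \<in> S" for s
  proof -
    have "D = Ds s * (\<Prod>t\<in>S - {s}. Ds t)"
      unfolding D_def using assms(1) s by (simp add: prod.remove)
    then have "polyH D * x s = polyH (\<Prod>t\<in>S - {s}. Ds t) * (polyH (Ds s) * x s)"
      by (simp add: polyH_mult mult.assoc polyH_commute[of "Ds s"] flip: mult.assoc)
    also have "\<dots> \<approx> polyH (\<Prod>t\<in>S - {s}. Ds t) * (polyH (Ns s) * b)"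
      using Ds(2)[OF s] by (rule cong_mult_left)
    also have "\<dots> = polyH (N s) * b"
      by (simp add: N_def polyH_mult mult.assoc polyH_commute[of "Ns s"] flip: mult.assoc)
    finally show ?thesis .
  qed
  moreover have "D \<noteq> 0" "N s0 \<noteq> 0"
    unfolding D_def N_def using assms(1) Ds(1) by (simp_all add: Ns_def prod_zero_iff)
  ultimately show ?thesis
    using that by blast
qed

text \<open>Each reduced word \<open>s\<close> of degree \<open>g\<close> satisfies \<open>D s = N\<^sub>s X\<^sup>g\<close> for the standard monomial
  \<open>X\<^sup>g\<close> and a common \<open>D\<close>; a B\'ezout combination \<open>a = \<Sum> c\<^sub>s s\<close> with \<open>D a = gcd(N\<^sub>s) X\<^sup>g\<close> then
  divides every reduced word.\<close>

lemma crystalline_generator: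
  assumes "p1 \<noteq> 0"
  obtains a D G where "a \<in> Hom g" "D \<noteq> 0" "G \<noteq> 0" "polyH D * a \<approx> polyH G * word (std_word g)"
    "\<forall>s. reduced s \<and> wdeg s = g \<longrightarrow> (\<exists>q. word s - polyH q * a \<in> torsion)"
proof -
  define S where "S = {s. reduced s \<and> wdeg s = g}"
  have fin: "finite S"
    unfolding S_def by (rule finite_reduced)
  have std: "std_word g \<in> S"
    unfolding S_def by (simp add: reduced_std_word wdeg_std_word)
  have "\<forall>s\<in>S. rat_multiple (word s) (word (std_word g))"
    using rat_multiple_std_word[OF _ assms] by (auto simp: S_def)
  then obtain D N where "D \<noteq> 0" and common: "\<forall>s\<in>S. polyH D * word s \<approx> polyH (N s) * word (std_word g)"
    and "N (std_word g) \<noteq> 0"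
    by (rule rat_multiple_common_denominator[OF fin _ std refl])
  obtain c G where cG: "(\<Sum>s\<in>S. c s * N s) = G" "\<forall>s\<in>S. G dvd N s"
    "(\<exists>s\<in>S. N s \<noteq> 0) \<Longrightarrow> G \<noteq> 0"
    using bezout_finite_family[OF fin, of N] by blast
  have "G \<noteq> 0"
    using cG(3) std \<open>N (std_word g) \<noteq> 0\<close> by auto
  define a where "a = (\<Sum>s\<in>S. polyH (c s) * word s)"
  have "a \<in> Hom g"
    unfolding a_def using Hom_word
    by (intro Hom_sum Hom_mult_degree0_left[OF Hom_polyH]) (auto simp: S_def)
  have Da: "polyH D * a \<approx> polyH G * word (std_word g)"
  proof -
    have "polyH D * a = (\<Sum>s\<in>S. polyH (c s) * (polyH D * word s))"
      unfolding a_def by (simp add: sum_distrib_left mult.assoc polyH_commute[of D] flip: mult.assoc)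
    also have "\<dots> \<approx> (\<Sum>s\<in>S. polyH (c s) * (polyH (N s) * word (std_word g)))"
      using common by (intro cong_sum cong_mult_left) auto
    also have "\<dots> = polyH G * word (std_word g)"
      by (simp add: polyH_sum sum_distrib_right polyH_mult mult.assoc flip: cG(1))
    finally show ?thesis .
  qed
  have span: "\<exists>q. word s - polyH q * a \<in> torsion" if "reduced s" "wdeg s = g" for s
  proof -
    have s: "s \<in> S"
      using that by (simp add: S_def)
    obtain q where q: "N s = G * q"
      using cG(2) s by (auto elim: dvdE)
    have "polyH D * (word s - polyH q * a) = polyH D * word s - polyH q * (polyH D * a)"
      by (simp add: right_diff_distrib mult.assoc polyH_commute[of D] flip: mult.assoc)
    also have "\<dots> \<approx> polyH (N s) * word (std_word g) - polyH q * (polyH G * word (std_word g))"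
      using common s cong_mult_left[OF Da] by (blast intro: cong_diff)
    also have "\<dots> = 0"
      by (simp add: q polyH_mult mult.assoc polyH_commute[of G] flip: mult.assoc)
    finally show ?thesis
      using \<open>D \<noteq> 0\<close> by (intro exI[of _ q] torsionI) (simp_all add: cong_rel_def)
  qed
  show ?thesis
    using span by (intro that[OF \<open>a \<in> Hom g\<close> \<open>D \<noteq> 0\<close> \<open>G \<noteq> 0\<close> Da]) blast
qed

lemma polyH_torsion_of_generator:
  assumes "p1 \<noteq> 0" "p2 \<noteq> 0" "D \<noteq> 0" "G \<noteq> 0" "polyH D * a \<approx> polyH G * word (std_word g)"
    and "polyH E * a \<in> torsion"
  shows "polyH E \<in> torsion"
proof -
  obtain r where r: "r \<noteq> 0" "word (std_word g) * word (std_word_inv g) \<approx> polyH r"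
    using cong_polyH_nonzero_std_word_inv(2)[OF assms(1,2), of g]
    unfolding cong_polyH_nonzero_def by blast
  have "polyH D * (polyH E * a) = polyH E * (polyH D * a)"
    by (simp add: polyH_commute[of D E] flip: mult.assoc)
  also have "\<dots> \<approx> polyH E * (polyH G * word (std_word g))"
    using assms(5) by (rule cong_mult_left)
  finally have "polyH E * (polyH G * word (std_word g)) \<in> torsion"
    using cong_torsion torsion_polyH_mult[OF assms(6)] by blast
  then have "polyH E * (polyH G * word (std_word g)) * word (std_word_inv g) \<in> torsion"
    by (rule torsion_mult_right)
  then have "(polyH E * polyH G) * (word (std_word g) * word (std_word_inv g)) \<in> torsion"
    by (simp add: mult.assoc)
  moreover have "(polyH E * polyH G) * (word (std_word g) * word (std_word_inv g)) \<approx>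
      (polyH E * polyH G) * polyH r"
    using r(2) by (rule cong_mult_left)
  ultimately have "(polyH E * polyH G) * polyH r \<in> torsion"
    using cong_torsion by blast
  also have "(polyH E * polyH G) * polyH r = polyH (G * r) * polyH E"
    by (simp add: ac_simps flip: polyH_mult)
  finally have "polyH (G * r) * polyH E \<in> torsion" .
  moreover have "G * r \<noteq> 0"
    using assms(4) r(1) by simp
  ultimately show ?thesis
    by (blast intro: torsion_cancel_polyH)
qed

lemma polyH_torsion_shift:
  assumes "p1 \<noteq> 0" "p2 \<noteq> 0" "polyH (shift (- weight g) E) \<in> torsion"
  shows "polyH E \<in> torsion"
proof -
  obtain r where r: "r \<noteq> 0" "word (std_word_inv g) * word (std_word g) \<approx> polyH r"
    using cong_polyH_nonzero_std_word_inv(1)[OF assms(1,2), of g]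
    unfolding cong_polyH_nonzero_def by blast
  have "polyH (shift (- weight g) E) * word (std_word g) \<approx> word (std_word g) * polyH E"
    using polyH_Hom_comm[OF Hom_word, of "shift (- weight g) E" "std_word g"]
    by (simp add: wdeg_std_word)
  then have "word (std_word g) * polyH E \<in> torsion"
    using cong_torsion torsion_mult_right[OF assms(3)] by blast
  then have "word (std_word_inv g) * (word (std_word g) * polyH E) \<in> torsion"
    by (rule torsion_Hom_mult[OF Hom_word])
  moreover have "word (std_word_inv g) * (word (std_word g) * polyH E) \<approx> polyH r * polyH E"
    using cong_mult_right[OF r(2)] by (simp add: mult.assoc)
  ultimately have "polyH r * polyH E \<in> torsion"
    using cong_torsion by blast
  then show ?thesis
    by (rule torsion_cancel_polyH[OF r(1)])
qed

lemma crystalline_torsion: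
  assumes "p1 \<noteq> 0" "p2 \<noteq> 0"
  shows "crystalline_quot torsion"
  unfolding crystalline_quot_def fmul_eq_times
proof (intro conjI graded_torsion allI)
  fix g
  obtain a D G where a: "a \<in> Hom g" "D \<noteq> 0" "G \<noteq> 0" "polyH D * a \<approx> polyH G * word (std_word g)"
    and span: "\<forall>s. reduced s \<and> wdeg s = g \<longrightarrow> (\<exists>q. word s - polyH q * a \<in> torsion)"
    by (rule crystalline_generator[OF assms(1)])
  note free = polyH_torsion_of_generator[OF assms a(2-4)]
  show "\<exists>a\<in>Hom g. (\<forall>d\<in>Hom g. \<exists>e\<in>Hom (0, 0). d - e * a \<in> torsion) \<and>
      (\<forall>d\<in>Hom g. \<exists>e\<in>Hom (0, 0). d - a * e \<in> torsion) \<and>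
      (\<forall>e\<in>Hom (0, 0). e * a \<in> torsion \<longrightarrow> e \<in> torsion) \<and>
      (\<forall>e\<in>Hom (0, 0). a * e \<in> torsion \<longrightarrow> e \<in> torsion)"
  proof (intro bexI[OF _ a(1)] conjI ballI impI)
    fix d assume "d \<in> Hom g"
    obtain E where E: "d - polyH E * a \<in> torsion"
      using Hom_left_span[OF span \<open>d \<in> Hom g\<close>] by blast
    then show "\<exists>e\<in>Hom (0, 0). d - e * a \<in> torsion"
      using Hom_polyH by blast
    have "(d - polyH E * a) + (polyH E * a - a * polyH (shift (weight g) E)) \<in> torsion"
      using polyH_Hom_comm[OF a(1), of E] unfolding cong_rel_def
      by (rule torsion_add[OF E rel_ideal_torsion])
    then show "\<exists>e\<in>Hom (0, 0). d - a * e \<in> torsion"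
      using Hom_polyH by force
  next
    fix e assume "e \<in> Hom (0, 0)" "e * a \<in> torsion"
    then obtain E where E: "e \<approx> polyH E"
      by (auto elim: Hom_degree0_cong_polyH)
    then have "polyH E * a \<in> torsion"
      using cong_torsion[OF cong_mult_right[OF E]] \<open>e * a \<in> torsion\<close> by blast
    then show "e \<in> torsion"
      using cong_torsion[OF E] free by blast
  next
    fix e assume "e \<in> Hom (0, 0)" "a * e \<in> torsion"
    then obtain E where E: "e \<approx> polyH E"
      by (auto elim: Hom_degree0_cong_polyH)
    have "a * e \<approx> polyH (shift (- weight g) E) * a"
      using cong_trans[OF cong_mult_left[OF E] Hom_polyH_comm[OF a(1)]] .
    then have "polyH (shift (- weight g) E) \<in> torsion"
      using cong_torsion \<open>a * e \<in> torsion\<close> free by blast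
    then show "e \<in> torsion"
      using cong_torsion[OF E] polyH_torsion_shift[OF assms] by blast
  qed
qed

end

theorem mainTheorem9:
  fixes a1 a2 :: complex and p1 p2 :: "complex poly"
  assumes "p1 \<noteq> 0" and "p2 \<noteq> 0"
    and "pcompose p1 [:a2 / 2, 1:] * pcompose p2 [:a1 / 2, 1:]
         = pcompose p1 [:- a2 / 2, 1:] * pcompose p2 [:- a1 / 2, 1:]"
  shows "crystalline_quot (Jker a1 a2 p1 p2)"
proof -
  interpret kleinian_fiber_product a1 a2 p1 p2 .
  show ?thesis
    using crystalline_torsion[OF assms(1,2)] by (simp add: Jker_eq_torsion)
qed

end
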